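(* Let $q$ be a positive integer, let $a$ be an integer invertible modulo $q$, and let $\mathbf{r}\in\mathbb{N}_0^{q-1}$. Then $|\mathscr{W}^{(q)}_{\mathbf{r}}|=|\mathscr{W}^{(q)}_{{}^a\mathbf{r}}|$.
   Context: A composition is a finite sequence $\delta=(\delta_1,\ldots,\delta_s)$ of positive integers, $\ell(\delta)=s$; partial sums $\delta^+_j=\sum_{i=1}^j\delta_i$. A composition $\delta$ is $q'$-cumulative if it is nonempty and $q\nmid\delta^+_j$ for all $1\leq j\leq\ell(\delta)$. For $\mathbf{r}=(r_1,\ldots,r_{q-1})\in\mathbb{N}_0^{q-1}$, let $\mu$ be the partition with exactly $r_i$ parts equal to $i$ for each $1\le i\le q-1$ and no other parts, and let $\mathscr{W}^{(q)}_{\mathbf{r}}$ be the set of $q'$-cumulative compositions that are rearrangements of $\mu$. For $a$ invertible modulo $q$, ${}^a\mathbf{r}=(r'_1,\ldots,r'_{q-1})$ where $r'_j=r_i$ whenever $j\equiv ai\pmod q$ ($1\le i,j\le q-1$). *)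

theory Defs
  imports Main "HOL-Library.Multiset" "HOL-Number_Theory.Cong"
begin

definition q_cumulative :: "nat \<Rightarrow> nat list \<Rightarrow> bool" where
  "q_cumulative q \<delta> \<longleftrightarrow> \<delta> \<noteq> [] \<and> (\<forall>j\<in>{1..length \<delta>}. \<not> q dvd sum_list (take j \<delta>))"

(* The partition mu: exactly r i parts equal to i, for 1 <= i <= q-1. The vector
   r in N_0^{q-1} is represented as a function nat => nat of which only the values
   at 1..q-1 are used. *)
definition mu_mset :: "nat \<Rightarrow> (nat \<Rightarrow> nat) \<Rightarrow> nat multiset" where
  "mu_mset q r = (\<Sum>i\<in>{1..q-1}. replicate_mset (r i) i)"

definition W :: "nat \<Rightarrow> (nat \<Rightarrow> nat) \<Rightarrow> nat list set" where
  "W q r = {\<delta>. (\<forall>x\<in>set \<delta>. 0 < x) \<and> q_cumulative q \<delta> \<and> mset \<delta> = mu_mset q r}"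

definition twist :: "nat \<Rightarrow> int \<Rightarrow> (nat \<Rightarrow> nat) \<Rightarrow> (nat \<Rightarrow> nat)" where
  "twist q a r = (\<lambda>j. r (THE i. i \<in> {1..q-1} \<and> [int j = a * int i] (mod int q)))"

end

theory Submission
  imports Defs
begin

text \<open>Multiplication by \<open>a\<close> permutes the nonzero residues modulo \<open>q\<close>; applied entrywise to a
  composition it multiplies every partial sum by \<open>a\<close> modulo \<open>q\<close>, so it preserves
  \<open>q'\<close>-cumulativity, and it turns a rearrangement of the partition with multiplicities \<open>r\<close> into
  one with multiplicities \<open>\<^sup>ar\<close>. Multiplication by an inverse \<open>b\<close> of \<open>a\<close> undoes it, giving a
  bijection between the two sets of compositions.\<close>

definition scale_mod :: "nat \<Rightarrow> int \<Rightarrow> nat \<Rightarrow> nat" where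
  "scale_mod q a x = nat ((a * int x) mod int q)"

lemma int_scale_mod: "0 < q \<Longrightarrow> int (scale_mod q a x) = (a * int x) mod int q"
  unfolding scale_mod_def by simp

lemma scale_mod_cong: "0 < q \<Longrightarrow> [int (scale_mod q a x) = a * int x] (mod int q)"
  by (simp add: int_scale_mod cong_def)

lemma scale_mod_nonzero_residue:
  assumes "0 < q" and "coprime a (int q)" and "x \<in> {1..q-1}"
  shows "scale_mod q a x \<in> {1..q-1}"
proof -
  have "(a * int x) mod int q \<noteq> 0"
  proof
    assume "(a * int x) mod int q = 0"
    with assms(2) have "q dvd x"
      by (simp add: mod_eq_0_iff_dvd coprime_commute coprime_dvd_mult_right_iff)
    with assms(3) show False by (auto dest: dvd_imp_le)
  qed
  moreover have "0 \<le> (a * int x) mod int q" "(a * int x) mod int q < int q"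
    using assms(1) by simp_all
  ultimately show ?thesis unfolding scale_mod_def by auto
qed

lemma scale_mod_scale_mod_inverse:
  assumes "0 < q" and "[a * b = 1] (mod int q)" and "x < q"
  shows "scale_mod q a (scale_mod q b x) = x"
proof -
  have "int (scale_mod q a (scale_mod q b x)) = (a * ((b * int x) mod int q)) mod int q"
    using assms(1) by (simp add: int_scale_mod)
  also have "\<dots> = ((a * b) * int x) mod int q"
    by (simp add: mod_mult_right_eq ac_simps)
  also have "\<dots> = (1 * int x) mod int q"
    using assms(2) unfolding cong_def by (metis mod_mult_left_eq)
  also have "\<dots> = int x"
    using assms(3) by simp
  finally show ?thesis by simp
qed

lemma map_scale_mod_map_scale_mod_inverse:
  assumes "0 < q" and "[a * b = 1] (mod int q)" and "set \<delta> \<subseteq> {..<q}"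
  shows "map (scale_mod q a) (map (scale_mod q b) \<delta>) = \<delta>"
  using assms(3) scale_mod_scale_mod_inverse[OF assms(1,2)] by (induction \<delta>) auto

lemma twist_scale_mod:
  assumes "0 < q" and "coprime a (int q)" and x: "x \<in> {1..q-1}"
  shows "twist q a r (scale_mod q a x) = r x"
proof -
  have "(THE i. i \<in> {1..q-1} \<and> [int (scale_mod q a x) = a * int i] (mod int q)) = x"
  proof (rule the_equality)
    show "x \<in> {1..q-1} \<and> [int (scale_mod q a x) = a * int x] (mod int q)"
      using x scale_mod_cong[OF assms(1)] by simp
  next
    fix i assume i: "i \<in> {1..q-1} \<and> [int (scale_mod q a x) = a * int i] (mod int q)"
    then have "[a * int i = a * int x] (mod int q)"
      using assms(1) by (simp add: int_scale_mod cong_def)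
    with assms(2) have "[i = x] (mod q)"
      by (simp add: cong_mult_lcancel cong_int_iff)
    then show "i = x" using x i by (auto simp: cong_def)
  qed
  then show ?thesis unfolding twist_def by simp
qed

lemma sum_list_map_scale_mod_cong:
  "0 < q \<Longrightarrow> [int (sum_list (map (scale_mod q a) xs)) = a * int (sum_list xs)] (mod int q)"
proof (induction xs)
  case (Cons x xs)
  then have "[int (scale_mod q a x) + int (sum_list (map (scale_mod q a) xs))
      = a * int x + a * int (sum_list xs)] (mod int q)"
    by (intro cong_add scale_mod_cong)
  then show ?case by (simp add: distrib_left)
qed simp

lemma dvd_sum_list_map_scale_mod_iff:
  assumes "0 < q" and "coprime a (int q)"
  shows "q dvd sum_list (map (scale_mod q a) xs) \<longleftrightarrow> q dvd sum_list xs"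
proof -
  have "q dvd sum_list (map (scale_mod q a) xs) \<longleftrightarrow> int q dvd a * int (sum_list xs)"
    using cong_dvd_iff[OF sum_list_map_scale_mod_cong[OF assms(1)]] by simp
  also have "\<dots> \<longleftrightarrow> q dvd sum_list xs"
    using assms(2) by (simp add: coprime_commute coprime_dvd_mult_right_iff)
  finally show ?thesis .
qed

lemma q_cumulative_map_scale_mod_iff:
  assumes "0 < q" and "coprime a (int q)"
  shows "q_cumulative q (map (scale_mod q a) \<delta>) \<longleftrightarrow> q_cumulative q \<delta>"
  using dvd_sum_list_map_scale_mod_iff[OF assms] unfolding q_cumulative_def by (simp add: take_map)

lemma image_mset_sum: "image_mset f (\<Sum>x\<in>A. g x) = (\<Sum>x\<in>A. image_mset f (g x))"
  by (induction A rule: infinite_finite_induct) auto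

lemma set_mset_mu_mset: "set_mset (mu_mset q r) \<subseteq> {1..q-1}"
  unfolding mu_mset_def by (subst set_mset_sum) (auto split: if_splits)

lemma set_subset_if_in_W:
  assumes "\<delta> \<in> W q r"
  shows "set \<delta> \<subseteq> {1..q-1}"
proof -
  have "mset \<delta> = mu_mset q r" using assms by (simp add: W_def)
  then have "set \<delta> = set_mset (mu_mset q r)" by (metis set_mset_mset)
  then show ?thesis using set_mset_mu_mset by simp
qed

lemma image_mset_scale_mod_mu_mset:
  assumes "0 < q" and "coprime a (int q)"
  shows "image_mset (scale_mod q a) (mu_mset q r) = mu_mset q (twist q a r)"
proof -
  let ?s = "scale_mod q a"
  have inj: "inj_on ?s {1..q-1}"
  proof -
    obtain b where "[b * a = 1] (mod int q)"
      using cong_solve_coprime_int[OF assms(2)] by (auto simp: mult.commute)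
    then have "scale_mod q b (?s x) = x" if "x \<in> {1..q-1}" for x
      using assms(1) that by (intro scale_mod_scale_mod_inverse) auto
    then show ?thesis by (rule inj_on_inverseI)
  qed
  then have perm: "?s ` {1..q-1} = {1..q-1}"
    using scale_mod_nonzero_residue[OF assms] by (intro endo_inj_surj) auto
  have "image_mset ?s (mu_mset q r) = (\<Sum>i\<in>{1..q-1}. replicate_mset (r i) (?s i))"
    unfolding mu_mset_def by (simp add: image_mset_sum)
  also have "\<dots> = (\<Sum>i\<in>{1..q-1}. replicate_mset (twist q a r (?s i)) (?s i))"
    using twist_scale_mod[OF assms] by (intro sum.cong) auto
  also have "\<dots> = (\<Sum>j\<in>?s ` {1..q-1}. replicate_mset (twist q a r j) j)"
    by (rule sum.reindex[OF inj, symmetric, unfolded comp_def])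
  also have "\<dots> = mu_mset q (twist q a r)"
    unfolding mu_mset_def perm ..
  finally show ?thesis .
qed

lemma map_scale_mod_in_W:
  assumes "0 < q" and "coprime a (int q)" and "\<delta> \<in> W q r"
  shows "map (scale_mod q a) \<delta> \<in> W q (twist q a r)"
proof -
  have "\<forall>x\<in>set (map (scale_mod q a) \<delta>). 0 < x"
    using set_subset_if_in_W[OF assms(3)] scale_mod_nonzero_residue[OF assms(1,2)] by fastforce
  with assms show ?thesis
    unfolding W_def by (simp add: q_cumulative_map_scale_mod_iff image_mset_scale_mod_mu_mset[symmetric])
qed

lemma W_twist_inverse:
  assumes "0 < q" and "coprime a (int q)" and "coprime b (int q)" and "[b * a = 1] (mod int q)"
  shows "W q (twist q b (twist q a r)) = W q r"
proof -
  have "mu_mset q (twist q b (twist q a r))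
      = image_mset (scale_mod q b) (image_mset (scale_mod q a) (mu_mset q r))"
    by (simp add: image_mset_scale_mod_mu_mset assms(1-3))
  also have "\<dots> = image_mset id (mu_mset q r)"
    unfolding image_mset.compositionality
    using set_mset_mu_mset scale_mod_scale_mod_inverse[OF assms(1,4)]
    by (intro image_mset_cong) fastforce
  finally show ?thesis unfolding W_def by simp
qed

theorem lemma2:
  fixes q :: nat and a :: int and r :: "nat \<Rightarrow> nat"
  assumes "0 < q" and "coprime a (int q)"
  shows "card (W q r) = card (W q (twist q a r))"
proof -
  obtain b where ab: "[a * b = 1] (mod int q)"
    using cong_solve_coprime_int[OF assms(2)] by auto
  then have ba: "[b * a = 1] (mod int q)" by (simp add: mult.commute)
  have b: "coprime b (int q)"
    using cong_imp_coprime[OF cong_sym[OF ba]] by simp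
  have preimage_in_W: "map (scale_mod q b) \<delta> \<in> W q r" if "\<delta> \<in> W q (twist q a r)" for \<delta>
    using map_scale_mod_in_W[OF assms(1) b that] W_twist_inverse[OF assms b ba] by simp
  have below_q: "set \<delta> \<subseteq> {..<q}" if "\<delta> \<in> W q r'" for \<delta> r'
    using set_subset_if_in_W[OF that] assms(1) by force
  have "bij_betw (map (scale_mod q a)) (W q r) (W q (twist q a r))"
    using map_scale_mod_in_W[OF assms] preimage_in_W below_q
      map_scale_mod_map_scale_mod_inverse[OF assms(1) ba]
      map_scale_mod_map_scale_mod_inverse[OF assms(1) ab]
    by (intro bij_betw_byWitness[where f' = "map (scale_mod q b)"]) auto
  then show ?thesis by (rule bij_betw_same_card)
qed

end
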